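(* Let $n\ge1$ and let $M_1,\dots,M_n$ be two-row channels each having exactly two columns. Then the greatest lower bound $\min_{1\le i\le n}M_i$ exists in $(\mathbb{C}_2,\sqsubseteq)$ (and is a two-row channel with finitely many columns).
   Context: A two-row channel with output set $\mathcal{Y}$ is a $2\times|\mathcal{Y}|$ matrix with nonnegative entries whose rows sum to $1$; $\mathbb{C}_2$ denotes the set of such channels. Refinement: $C\sqsubseteq C'$ iff there is a row-stochastic matrix $W$ with $C\cdot W=C'$. A greatest lower bound of a family $(M_i)$ is a channel $G$ with $G\sqsubseteq M_i$ for all $i$, such that $H\sqsubseteq G$ for every channel $H$ with $H\sqsubseteq M_i$ for all $i$ (unique up to mutual refinement). *)

theory Defs
  imports Main "HOL-Library.Product_Plus" Complex_Main
begin

text \<open>A two-row channel with m output columns (outputs indexed by 0..<m) is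
  a pair (m, C) with C :: bool \<Rightarrow> nat \<Rightarrow> real; the two rows are indexed by
  False/True. Only entries C r j with j < m are meaningful.\<close>

type_synonym channel2 = "nat \<times> (bool \<Rightarrow> nat \<Rightarrow> real)"

definition is_channel2 :: "channel2 \<Rightarrow> bool" where
  "is_channel2 M \<longleftrightarrow>
     (\<forall>r. \<forall>j < fst M. 0 \<le> snd M r j) \<and> (\<forall>r. (\<Sum>j < fst M. snd M r j) = 1)"

definition row_stochastic :: "nat \<Rightarrow> nat \<Rightarrow> (nat \<Rightarrow> nat \<Rightarrow> real) \<Rightarrow> bool" where
  "row_stochastic m m' W \<longleftrightarrow>
     (\<forall>j < m. (\<forall>k < m'. 0 \<le> W j k) \<and> (\<Sum>k < m'. W j k) = 1)"

definition refines :: "channel2 \<Rightarrow> channel2 \<Rightarrow> bool" where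
  "refines M M' \<longleftrightarrow>
     (\<exists>W. row_stochastic (fst M) (fst M') W \<and>
          (\<forall>r. \<forall>k < fst M'. (\<Sum>j < fst M. snd M r j * W j k) = snd M' r k))"

end

theory Submission
  imports Defs "HOL-Analysis.Analysis"
begin

(* The zonotope Z(C) = {C v | v in [0,1]^m} in the plane determines a two-row channel C up to
   refinement: by a two-row form of Blackwell's theorem, C refines to G iff Z(G) is contained in
   Z(C).  For a two-column channel M with first column p the zonotope is the parallelogram with
   vertices 0, p, (1,1) - p and (1,1), so H refines to every M_i iff Z(H) contains these finitely
   many points.  Their convex hull is a centrally symmetric polygon and is itself a zonotope,
   namely that of the channel whose columns are the edges of its lower boundary ordered by slope;
   this channel is the greatest lower bound. *)

(* HOL-Analysis imports Disjoint_Sets, which defines another constant named refines. *)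
hide_const (open) Disjoint_Sets.refines

section \<open>Zonotopes of two-row channels\<close>

definition unit_cube :: "nat \<Rightarrow> (nat \<Rightarrow> real) set" where
  "unit_cube m = PiE UNIV (\<lambda>j. if j < m then {0..1} else {0})"

lemma mem_unit_cube: "v \<in> unit_cube m \<longleftrightarrow> (\<forall>j<m. 0 \<le> v j \<and> v j \<le> 1) \<and> (\<forall>j\<ge>m. v j = 0)"
  unfolding unit_cube_def PiE_iff by (auto simp: not_less)

lemma compact_unit_cube: "compact (unit_cube m)"
proof -
  have "compactin (product_topology (\<lambda>i. euclidean) UNIV) (unit_cube m)"
    unfolding unit_cube_def by (subst compactin_PiE) simp
  then show ?thesis by (simp add: euclidean_product_topology)
qed

definition col_comb :: "nat \<Rightarrow> (bool \<Rightarrow> nat \<Rightarrow> real) \<Rightarrow> (nat \<Rightarrow> real) \<Rightarrow> real \<times> real" where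
  "col_comb m C v = (\<Sum>j<m. C False j * v j, \<Sum>j<m. C True j * v j)"

definition col_sum :: "nat \<Rightarrow> (bool \<Rightarrow> nat \<Rightarrow> real) \<Rightarrow> real \<times> real" where
  "col_sum m C = (\<Sum>j<m. C False j, \<Sum>j<m. C True j)"

lemma col_comb_one: "col_comb m C (\<lambda>_. 1) = col_sum m C"
  by (simp add: col_comb_def col_sum_def)

lemma col_comb_functional:
  "a * fst (col_comb m C v) + b * snd (col_comb m C v) = (\<Sum>j<m. v j * (a * C False j + b * C True j))"
  by (simp add: col_comb_def sum_distrib_left sum.distrib algebra_simps)

lemma col_comb_cong: "(\<And>j. j < m \<Longrightarrow> v j = w j) \<Longrightarrow> col_comb m C v = col_comb m C w"
  unfolding col_comb_def by (metis (no_types, lifting) lessThan_iff sum.cong)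

lemma continuous_on_col_comb: "continuous_on A (col_comb m C)"
  unfolding col_comb_def
  by (intro continuous_on_Pair continuous_on_sum continuous_on_mult continuous_on_const ballI
      continuous_on_subset[OF continuous_on_product_coordinates]) simp_all

definition zonotope :: "nat \<Rightarrow> (bool \<Rightarrow> nat \<Rightarrow> real) \<Rightarrow> (real \<times> real) set" where
  "zonotope m C = col_comb m C ` unit_cube m"

lemma mem_zonotope:
  "p \<in> zonotope m C \<longleftrightarrow> (\<exists>v. (\<forall>j<m. 0 \<le> v j \<and> v j \<le> 1) \<and> col_comb m C v = p)"
proof
  assume "\<exists>v. (\<forall>j<m. 0 \<le> v j \<and> v j \<le> 1) \<and> col_comb m C v = p"
  then obtain v where v: "\<forall>j<m. 0 \<le> v j \<and> v j \<le> 1" "col_comb m C v = p" by blast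
  define w where "w j = (if j < m then v j else 0)" for j
  have "w \<in> unit_cube m" using v(1) by (simp add: mem_unit_cube w_def)
  moreover have "col_comb m C w = p" using v(2) col_comb_cong[of m w v C] by (simp add: w_def)
  ultimately show "p \<in> zonotope m C" unfolding zonotope_def by blast
next
  assume "p \<in> zonotope m C"
  then obtain v where "v \<in> unit_cube m" "col_comb m C v = p" unfolding zonotope_def by blast
  then show "\<exists>v. (\<forall>j<m. 0 \<le> v j \<and> v j \<le> 1) \<and> col_comb m C v = p"
    by (intro exI[of _ v]) (simp add: mem_unit_cube)
qed

lemma col_comb_in_zonotope: "\<forall>j<m. 0 \<le> v j \<and> v j \<le> 1 \<Longrightarrow> col_comb m C v \<in> zonotope m C"
  unfolding mem_zonotope by blast

lemma compact_zonotope: "compact (zonotope m C)"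
  unfolding zonotope_def by (intro compact_continuous_image continuous_on_col_comb compact_unit_cube)

lemma convex_zonotope: "convex (zonotope m C)"
proof (rule convexI)
  fix p q and s t :: real
  assume "p \<in> zonotope m C" "q \<in> zonotope m C" and st: "0 \<le> s" "0 \<le> t" "s + t = 1"
  then obtain v w where v: "\<forall>j<m. 0 \<le> v j \<and> v j \<le> 1" "col_comb m C v = p"
    and w: "\<forall>j<m. 0 \<le> w j \<and> w j \<le> 1" "col_comb m C w = q"
    unfolding mem_zonotope by blast
  have cube: "\<forall>j<m. 0 \<le> s * v j + t * w j \<and> s * v j + t * w j \<le> 1"
  proof (intro allI impI)
    fix j assume "j < m"
    then have "0 \<le> v j" "v j \<le> 1" "0 \<le> w j" "w j \<le> 1" using v(1) w(1) by auto
    then show "0 \<le> s * v j + t * w j \<and> s * v j + t * w j \<le> 1"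
      using st convex_bound_le[of "v j" 1 "w j" s t] by simp
  qed
  have "col_comb m C (\<lambda>j. s * v j + t * w j) = s *\<^sub>R p + t *\<^sub>R q"
    using v(2) w(2) by (auto simp: col_comb_def sum_distrib_left sum.distrib algebra_simps)
  then show "s *\<^sub>R p + t *\<^sub>R q \<in> zonotope m C"
    using col_comb_in_zonotope[OF cube, of C] by simp
qed

lemma zonotope_reflect:
  assumes "p \<in> zonotope m C"
  shows "col_sum m C - p \<in> zonotope m C"
proof -
  obtain v where v: "\<forall>j<m. 0 \<le> v j \<and> v j \<le> 1" "col_comb m C v = p"
    using assms unfolding mem_zonotope by blast
  have cube: "\<forall>j<m. 0 \<le> 1 - v j \<and> 1 - v j \<le> 1" using v(1) by simp
  have "col_comb m C (\<lambda>j. 1 - v j) = col_sum m C - p"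
    using v(2) by (auto simp: col_comb_def col_sum_def algebra_simps sum_subtractf)
  then show ?thesis using col_comb_in_zonotope[OF cube, of C] by simp
qed

lemma zero_in_zonotope: "(0, 0) \<in> zonotope m C"
  using col_comb_in_zonotope[of m "\<lambda>_. 0" C] by (simp add: col_comb_def)

lemma col_sum_in_zonotope: "col_sum m C \<in> zonotope m C"
  using col_comb_in_zonotope[of m "\<lambda>_. 1" C] by (simp add: col_comb_one)

lemma channel_col_sum: "is_channel2 (m, C) \<Longrightarrow> col_sum m C = (1, 1)"
  unfolding is_channel2_def by (simp add: col_sum_def)

definition zonotope_support :: "nat \<Rightarrow> (bool \<Rightarrow> nat \<Rightarrow> real) \<Rightarrow> real \<Rightarrow> real \<Rightarrow> real" where
  "zonotope_support m C a b = (\<Sum>j<m. max 0 (a * C False j + b * C True j))"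

lemma col_comb_le_support:
  assumes "\<forall>j<m. 0 \<le> v j \<and> v j \<le> 1"
  shows "a * fst (col_comb m C v) + b * snd (col_comb m C v) \<le> zonotope_support m C a b"
  unfolding col_comb_functional zonotope_support_def
proof (rule sum_mono)
  fix j assume "j \<in> {..<m}"
  with assms have "0 \<le> v j" "v j \<le> 1" by auto
  then show "v j * (a * C False j + b * C True j) \<le> max 0 (a * C False j + b * C True j)"
    by (cases "a * C False j + b * C True j \<ge> 0") (auto intro: mult_left_le_one_le mult_nonneg_nonpos)
qed

lemma zonotope_support_attained:
  "\<exists>v\<in>unit_cube m. a * fst (col_comb m C v) + b * snd (col_comb m C v) = zonotope_support m C a b"
proof
  define v where "v j = (if j < m \<and> a * C False j + b * C True j > 0 then 1 else 0 :: real)" for j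
  show "v \<in> unit_cube m" by (simp add: mem_unit_cube v_def)
  show "a * fst (col_comb m C v) + b * snd (col_comb m C v) = zonotope_support m C a b"
    unfolding col_comb_functional zonotope_support_def by (rule sum.cong) (auto simp: v_def)
qed

lemma in_zonotope_iff_support:
  "p \<in> zonotope m C \<longleftrightarrow> (\<forall>a b. a * fst p + b * snd p \<le> zonotope_support m C a b)"
proof (intro iffI allI)
  fix a b assume "p \<in> zonotope m C"
  then show "a * fst p + b * snd p \<le> zonotope_support m C a b"
    using col_comb_le_support by (auto simp: mem_zonotope)
next
  assume le: "\<forall>a b. a * fst p + b * snd p \<le> zonotope_support m C a b"
  show "p \<in> zonotope m C"
  proof (rule ccontr)
    assume "p \<notin> zonotope m C"
    then obtain c d where cd: "inner c p < d" "\<forall>q\<in>zonotope m C. d < inner c q"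
      using separating_hyperplane_closed_point[OF convex_zonotope compact_imp_closed[OF compact_zonotope]]
      by blast
    obtain v where v: "v \<in> unit_cube m"
      "- fst c * fst (col_comb m C v) + - snd c * snd (col_comb m C v)
         = zonotope_support m C (- fst c) (- snd c)"
      using zonotope_support_attained by blast
    have "d < inner c (col_comb m C v)" using cd(2) v(1) by (auto simp: zonotope_def)
    then have "zonotope_support m C (- fst c) (- snd c) < - fst c * fst p + - snd c * snd p"
      using cd(1) v(2) by (simp add: inner_prod_def)
    then show False using le by (meson not_le)
  qed
qed

section \<open>Blackwell's theorem for two-row channels\<close>

definition col_mass :: "(bool \<Rightarrow> nat \<Rightarrow> real) \<Rightarrow> nat \<Rightarrow> real" where
  "col_mass C j = C False j + C True j"

definition col_ratio :: "(bool \<Rightarrow> nat \<Rightarrow> real) \<Rightarrow> nat \<Rightarrow> real" where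
  "col_ratio C j = C True j / col_mass C j"

definition lin_interp :: "real \<Rightarrow> real \<Rightarrow> real \<Rightarrow> real" where
  "lin_interp a b t = (1 - t) * a + t * b"

lemma functional_eq_mass_interp:
  assumes "0 < col_mass C j"
  shows "a * C False j + b * C True j = col_mass C j * lin_interp a b (col_ratio C j)"
proof -
  have T: "C True j = col_mass C j * col_ratio C j"
    using assms unfolding col_ratio_def by simp
  then have F: "C False j = col_mass C j * (1 - col_ratio C j)"
    unfolding col_mass_def by (simp add: algebra_simps)
  show ?thesis unfolding lin_interp_def by (subst T, subst F) (simp add: algebra_simps)
qed

lemma lin_interp_two_point:
  "(re - rs) * lin_interp a b t = (re - t) * lin_interp a b rs + (t - rs) * lin_interp a b re"
  by (simp add: lin_interp_def algebra_simps)

lemma lin_interp_between: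
  assumes "rs \<le> t" "t \<le> re"
  shows "min (lin_interp a b rs) (lin_interp a b re) \<le> lin_interp a b t"
    and "lin_interp a b t \<le> max (lin_interp a b rs) (lin_interp a b re)"
proof -
  have "lin_interp a b t - lin_interp a b rs = (b - a) * (t - rs)"
    and "lin_interp a b re - lin_interp a b t = (b - a) * (re - t)"
    by (simp_all add: lin_interp_def algebra_simps)
  moreover have "0 \<le> (b - a) * (t - rs) \<and> 0 \<le> (b - a) * (re - t)
      \<or> (b - a) * (t - rs) \<le> 0 \<and> (b - a) * (re - t) \<le> 0"
    using assms by (cases "a \<le> b") (auto simp: mult_nonpos_nonneg)
  ultimately show "min (lin_interp a b rs) (lin_interp a b re) \<le> lin_interp a b t"
    and "lin_interp a b t \<le> max (lin_interp a b rs) (lin_interp a b re)"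
    by linarith+
qed

lemma max_zero_add_same_sign:
  fixes p q :: real
  assumes "0 \<le> p * q"
  shows "max 0 (p + q) = max 0 p + max 0 q"
  using assms by (auto simp: zero_le_mult_iff max_def)

lemma zonotope_support_scale_cols:
  assumes "\<forall>j<m. 0 \<le> w j"
  shows "zonotope_support m (\<lambda>r j. C r j * w j) a b
           = (\<Sum>j<m. w j * max 0 (a * C False j + b * C True j))"
  unfolding zonotope_support_def
proof (rule sum.cong)
  fix j assume "j \<in> {..<m}"
  then have "max 0 (w j * (a * C False j + b * C True j)) = w j * max 0 (a * C False j + b * C True j)"
    using assms by (simp add: max_mult_distrib_left)
  then show "max 0 (a * (C False j * w j) + b * (C True j * w j))
               = w j * max 0 (a * C False j + b * C True j)"
    by (simp add: algebra_simps)
qed simp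

definition selects_ratio_interval ::
    "nat \<Rightarrow> (bool \<Rightarrow> nat \<Rightarrow> real) \<Rightarrow> (nat \<Rightarrow> real) \<Rightarrow> real \<Rightarrow> real \<Rightarrow> bool" where
  "selects_ratio_interval m C u rs re \<longleftrightarrow> rs \<le> re \<and>
     (\<forall>j<m. 0 < col_mass C j \<longrightarrow>
        (0 < u j \<longrightarrow> rs \<le> col_ratio C j \<and> col_ratio C j \<le> re) \<and>
        (u j < 1 \<longrightarrow> col_ratio C j \<le> rs \<or> re \<le> col_ratio C j))"

lemma selected_col_sign:
  assumes sel: "selects_ratio_interval m C u rs re" and j: "j < m" "0 < u j"
    and nonneg: "0 \<le> C False j" "0 \<le> C True j"
  shows "lin_interp a b rs \<le> 0 \<Longrightarrow> lin_interp a b re \<le> 0 \<Longrightarrow> a * C False j + b * C True j \<le> 0"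
    and "0 \<le> lin_interp a b rs \<Longrightarrow> 0 \<le> lin_interp a b re \<Longrightarrow> 0 \<le> a * C False j + b * C True j"
proof -
  consider "C False j = 0" "C True j = 0" | "0 < col_mass C j" "rs \<le> col_ratio C j" "col_ratio C j \<le> re"
    using sel j nonneg unfolding selects_ratio_interval_def col_mass_def by fastforce
  note cases = this
  show "lin_interp a b rs \<le> 0 \<Longrightarrow> lin_interp a b re \<le> 0 \<Longrightarrow> a * C False j + b * C True j \<le> 0"
    using cases
  proof cases
    case 2
    assume "lin_interp a b rs \<le> 0" "lin_interp a b re \<le> 0"
    then have "lin_interp a b (col_ratio C j) \<le> 0" using lin_interp_between(2)[OF 2(2,3), of a b] by linarith
    then show ?thesis using 2(1) functional_eq_mass_interp[OF 2(1)] by (simp add: mult_nonneg_nonpos)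
  qed simp
  show "0 \<le> lin_interp a b rs \<Longrightarrow> 0 \<le> lin_interp a b re \<Longrightarrow> 0 \<le> a * C False j + b * C True j"
    using cases
  proof cases
    case 2
    assume "0 \<le> lin_interp a b rs" "0 \<le> lin_interp a b re"
    then have "0 \<le> lin_interp a b (col_ratio C j)" using lin_interp_between(1)[OF 2(2,3), of a b] by linarith
    then show ?thesis using 2(1) functional_eq_mass_interp[OF 2(1)] by simp
  qed simp
qed

lemma remove_interval_support_nonpos:
  assumes nonneg: "\<forall>j<m. \<forall>r. 0 \<le> C r j" and u: "\<forall>j<m. 0 \<le> u j \<and> u j \<le> 1"
    and sel: "selects_ratio_interval m C u rs re" and p: "p \<in> zonotope m C"
    and L: "lin_interp a b rs \<le> 0" "lin_interp a b re \<le> 0"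
  shows "a * fst p + b * snd p \<le> zonotope_support m (\<lambda>r j. C r j * (1 - u j)) a b"
proof -
  have "zonotope_support m (\<lambda>r j. C r j * (1 - u j)) a b
      = (\<Sum>j<m. (1 - u j) * max 0 (a * C False j + b * C True j))"
    by (rule zonotope_support_scale_cols) (use u in simp)
  also have "\<dots> = zonotope_support m C a b"
    unfolding zonotope_support_def
  proof (rule sum.cong)
    fix j assume j: "j \<in> {..<m}"
    show "(1 - u j) * max 0 (a * C False j + b * C True j) = max 0 (a * C False j + b * C True j)"
    proof (cases "u j = 0")
      case False
      then have "a * C False j + b * C True j \<le> 0"
        using selected_col_sign(1)[OF sel _ _ _ _ L] u nonneg j by force
      then show ?thesis by simp
    qed simp
  qed simp
  finally show ?thesis using p in_zonotope_iff_support by auto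
qed

lemma remove_interval_support_nonneg:
  assumes nonneg: "\<forall>j<m. \<forall>r. 0 \<le> C r j" and u: "\<forall>j<m. 0 \<le> u j \<and> u j \<le> 1"
    and sel: "selects_ratio_interval m C u rs re" and pu: "p + col_comb m C u \<in> zonotope m C"
    and L: "0 \<le> lin_interp a b rs" "0 \<le> lin_interp a b re"
  shows "a * fst p + b * snd p \<le> zonotope_support m (\<lambda>r j. C r j * (1 - u j)) a b"
proof -
  have "zonotope_support m (\<lambda>r j. C r j * (1 - u j)) a b
      = (\<Sum>j<m. (1 - u j) * max 0 (a * C False j + b * C True j))"
    by (rule zonotope_support_scale_cols) (use u in simp)
  also have "\<dots> = (\<Sum>j<m. max 0 (a * C False j + b * C True j) - u j * (a * C False j + b * C True j))"
  proof (rule sum.cong)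
    fix j assume j: "j \<in> {..<m}"
    show "(1 - u j) * max 0 (a * C False j + b * C True j)
        = max 0 (a * C False j + b * C True j) - u j * (a * C False j + b * C True j)"
    proof (cases "u j = 0")
      case False
      then have "0 \<le> a * C False j + b * C True j"
        using selected_col_sign(2)[OF sel _ _ _ _ L] u nonneg j by force
      then show ?thesis by (simp add: algebra_simps)
    qed simp
  qed simp
  also have "\<dots> = zonotope_support m C a b - (a * fst (col_comb m C u) + b * snd (col_comb m C u))"
    unfolding zonotope_support_def col_comb_functional by (simp add: sum_subtractf)
  moreover have "a * fst (p + col_comb m C u) + b * snd (p + col_comb m C u) \<le> zonotope_support m C a b"
    using pu in_zonotope_iff_support by blast
  ultimately show ?thesis by (simp add: algebra_simps)
qed

lemma remove_interval_support_same_sign: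
  assumes nonneg: "\<forall>j<m. \<forall>r. 0 \<le> C r j" and u: "\<forall>j<m. 0 \<le> u j \<and> u j \<le> 1"
    and sel: "selects_ratio_interval m C u rs re"
    and p: "p \<in> zonotope m C" and pu: "p + col_comb m C u \<in> zonotope m C"
    and L: "lin_interp a b rs \<le> 0 \<and> lin_interp a b re \<le> 0 \<or> 0 \<le> lin_interp a b rs \<and> 0 \<le> lin_interp a b re"
  shows "a * fst p + b * snd p \<le> zonotope_support m (\<lambda>r j. C r j * (1 - u j)) a b"
  using L remove_interval_support_nonpos[OF nonneg u sel p] remove_interval_support_nonneg[OF nonneg u sel pu]
  by blast

lemma lin_interp_split:
  assumes "rs < re"
  shows "\<exists>a1 a2 b1 b2. a = a1 + a2 \<and> b = b1 + b2 \<and>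
    (\<forall>t. (re - rs) * lin_interp a1 b1 t = lin_interp a b rs * (re - t)) \<and>
    (\<forall>t. (re - rs) * lin_interp a2 b2 t = lin_interp a b re * (t - rs))"
proof -
  define c1 where "c1 = lin_interp a b rs"
  define c2 where "c2 = lin_interp a b re"
  define a1 where "a1 = c1 * re / (re - rs)"
  define b1 where "b1 = c1 * (re - 1) / (re - rs)"
  define a2 where "a2 = - c2 * rs / (re - rs)"
  define b2 where "b2 = c2 * (1 - rs) / (re - rs)"
  have scaled: "(re - rs) * lin_interp a' b' t = (1 - t) * ((re - rs) * a') + t * ((re - rs) * b')"
    for a' b' t by (simp add: lin_interp_def algebra_simps)
  have coeffs: "(re - rs) * a1 = c1 * re" "(re - rs) * b1 = c1 * (re - 1)"
    "(re - rs) * a2 = - c2 * rs" "(re - rs) * b2 = c2 * (1 - rs)"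
    using assms by (simp_all add: a1_def b1_def a2_def b2_def)
  have L1: "(re - rs) * lin_interp a1 b1 t = c1 * (re - t)"
    and L2: "(re - rs) * lin_interp a2 b2 t = c2 * (t - rs)" for t
    unfolding scaled coeffs by (simp_all add: algebra_simps)
  have "(re - rs) * lin_interp a b t = (re - rs) * (lin_interp a1 b1 t + lin_interp a2 b2 t)" for t
    unfolding lin_interp_two_point[of re rs a b t] distrib_left L1 L2 c1_def c2_def by simp
  from this[of 0] this[of 1] have "a = a1 + a2" "b = b1 + b2"
    using assms by (simp_all add: lin_interp_def)
  then show ?thesis using L1 L2 unfolding c1_def c2_def by blast
qed

lemma unselected_col_parts_same_sign:
  assumes sel: "selects_ratio_interval m C u rs re" and j: "j < m" "u j < 1" "0 < col_mass C j"
    and d: "rs < re" and c: "c1 * c2 \<le> 0"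
    and L1: "\<And>t. (re - rs) * lin_interp a1 b1 t = c1 * (re - t)"
    and L2: "\<And>t. (re - rs) * lin_interp a2 b2 t = c2 * (t - rs)"
  shows "0 \<le> (a1 * C False j + b1 * C True j) * (a2 * C False j + b2 * C True j)"
proof -
  let ?t = "col_ratio C j"
  have "?t \<le> rs \<or> re \<le> ?t" using sel j unfolding selects_ratio_interval_def by auto
  then have "(re - ?t) * (?t - rs) \<le> 0" using d by (auto simp: mult_le_0_iff)
  then have "0 \<le> (c1 * c2) * ((re - ?t) * (?t - rs))"
    using c by (simp add: mult_nonpos_nonpos)
  also have "\<dots> = ((re - rs) * lin_interp a1 b1 ?t) * ((re - rs) * lin_interp a2 b2 ?t)"
    unfolding L1 L2 by (simp add: algebra_simps)
  also have "\<dots> = (re - rs)^2 * (lin_interp a1 b1 ?t * lin_interp a2 b2 ?t)"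
    by (simp add: power2_eq_square algebra_simps)
  finally have "0 \<le> lin_interp a1 b1 ?t * lin_interp a2 b2 ?t"
    using d by (simp add: zero_le_mult_iff)
  then show ?thesis
    unfolding functional_eq_mass_interp[OF j(3)] using j(3) by (simp add: algebra_simps)
qed

text \<open>A functional whose interpolant changes sign on [rs, re] is the sum of two functionals
  vanishing at re and at rs respectively; they agree in sign on every column that is not fully
  removed, so their supports add up.\<close>
lemma remove_interval_support_mixed:
  assumes nonneg: "\<forall>j<m. \<forall>r. 0 \<le> C r j" and u: "\<forall>j<m. 0 \<le> u j \<and> u j \<le> 1"
    and sel: "selects_ratio_interval m C u rs re"
    and p: "p \<in> zonotope m C" and pu: "p + col_comb m C u \<in> zonotope m C"
    and mixed: "lin_interp a b rs * lin_interp a b re < 0"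
  shows "a * fst p + b * snd p \<le> zonotope_support m (\<lambda>r j. C r j * (1 - u j)) a b"
proof -
  let ?C' = "\<lambda>r j. C r j * (1 - u j)"
  have "rs \<noteq> re" using mixed by (metis not_square_less_zero)
  then have d: "rs < re" using sel unfolding selects_ratio_interval_def by simp
  obtain a1 a2 b1 b2 where ab: "a = a1 + a2" "b = b1 + b2"
    and L1: "\<And>t. (re - rs) * lin_interp a1 b1 t = lin_interp a b rs * (re - t)"
    and L2: "\<And>t. (re - rs) * lin_interp a2 b2 t = lin_interp a b re * (t - rs)"
    using lin_interp_split[OF d, of a b] by blast
  have "lin_interp a1 b1 re = 0" "lin_interp a2 b2 rs = 0"
    using L1[of re] L2[of rs] d by simp_all
  then have "a1 * fst p + b1 * snd p \<le> zonotope_support m ?C' a1 b1"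
    and "a2 * fst p + b2 * snd p \<le> zonotope_support m ?C' a2 b2"
    by (auto intro!: remove_interval_support_same_sign[OF nonneg u sel p pu])
  moreover have scale: "zonotope_support m ?C' a' b'
      = (\<Sum>j<m. (1 - u j) * max 0 (a' * C False j + b' * C True j))" for a' b'
    by (rule zonotope_support_scale_cols) (use u in simp)
  have "zonotope_support m ?C' a b = zonotope_support m ?C' a1 b1 + zonotope_support m ?C' a2 b2"
    unfolding scale sum.distrib[symmetric]
  proof (rule sum.cong)
    fix j assume j: "j \<in> {..<m}"
    have "0 \<le> C False j" "0 \<le> C True j" "u j \<le> 1" using u nonneg j by auto
    then consider "u j = 1" | "C False j = 0" "C True j = 0" | "u j < 1" "0 < col_mass C j"
      unfolding col_mass_def by fastforce
    then show "(1 - u j) * max 0 (a * C False j + b * C True j)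
        = (1 - u j) * max 0 (a1 * C False j + b1 * C True j)
          + (1 - u j) * max 0 (a2 * C False j + b2 * C True j)"
    proof cases
      case 3
      have "a * C False j + b * C True j
          = (a1 * C False j + b1 * C True j) + (a2 * C False j + b2 * C True j)"
        unfolding ab by (simp add: algebra_simps)
      moreover have "0 \<le> (a1 * C False j + b1 * C True j) * (a2 * C False j + b2 * C True j)"
        using unselected_col_parts_same_sign[OF sel _ 3 d _ L1 L2] mixed j by simp
      ultimately show ?thesis using max_zero_add_same_sign by (simp add: distrib_left)
    qed simp_all
  qed simp
  ultimately show ?thesis unfolding ab by (simp add: algebra_simps)
qed

lemma zonotope_remove_interval:
  assumes nonneg: "\<forall>j<m. \<forall>r. 0 \<le> C r j" and u: "\<forall>j<m. 0 \<le> u j \<and> u j \<le> 1"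
    and sel: "selects_ratio_interval m C u rs re"
    and p: "p \<in> zonotope m C" and pu: "p + col_comb m C u \<in> zonotope m C"
  shows "p \<in> zonotope m (\<lambda>r j. C r j * (1 - u j))"
  unfolding in_zonotope_iff_support
proof (intro allI)
  fix a b
  show "a * fst p + b * snd p \<le> zonotope_support m (\<lambda>r j. C r j * (1 - u j)) a b"
  proof (cases "lin_interp a b rs * lin_interp a b re < 0")
    case True
    then show ?thesis by (rule remove_interval_support_mixed[OF nonneg u sel p pu])
  next
    case False
    then have "lin_interp a b rs \<le> 0 \<and> lin_interp a b re \<le> 0 \<or> 0 \<le> lin_interp a b rs \<and> 0 \<le> lin_interp a b re"
      by (cases "lin_interp a b rs" "0::real" rule: linorder_cases) (auto simp: mult_less_0_iff)
    then show ?thesis by (rule remove_interval_support_same_sign[OF nonneg u sel p pu])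
  qed
qed

lemma small_step_in_cube:
  fixes u e :: "nat \<Rightarrow> real"
  assumes u: "\<forall>l<m. 0 \<le> u l \<and> u l \<le> 1"
    and e: "\<forall>l<m. (e l < 0 \<longrightarrow> 0 < u l) \<and> (0 < e l \<longrightarrow> u l < 1)"
  shows "\<exists>t>0. \<forall>l<m. 0 \<le> u l + t * e l \<and> u l + t * e l \<le> 1"
proof -
  have "eventually (\<lambda>t. 0 \<le> u l + t * e l \<and> u l + t * e l \<le> 1) (at_right 0)" if l: "l < m" for l
    unfolding eventually_at_right_field
  proof (cases "e l" "0::real" rule: linorder_cases)
    case less
    note neg = less
    show "\<exists>b>0. \<forall>t>0. t < b \<longrightarrow> 0 \<le> u l + t * e l \<and> u l + t * e l \<le> 1"
    proof (intro exI[of _ "u l / - e l"] conjI allI impI)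
      have "0 < u l" using neg e l by blast
      then show "0 < u l / - e l" using neg by (simp add: divide_pos_neg)
      fix t assume t: "0 < t" "t < u l / - e l"
      have "t * - e l < u l" using t(2) neg by (subst (asm) pos_less_divide_eq) auto
      moreover have "t * e l \<le> 0" using t(1) neg by (simp add: mult_pos_neg less_imp_le)
      ultimately show "0 \<le> u l + t * e l" "u l + t * e l \<le> 1" using u l by auto
    qed
  next
    case greater
    with u e l show "\<exists>b>0. \<forall>t>0. t < b \<longrightarrow> 0 \<le> u l + t * e l \<and> u l + t * e l \<le> 1"
      by (intro exI[of _ "(1 - u l) / e l"]) (auto simp: field_simps)
  next
    case equal
    with u l show "\<exists>b>0. \<forall>t>0. t < b \<longrightarrow> 0 \<le> u l + t * e l \<and> u l + t * e l \<le> 1"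
      by (intro exI[of _ 1]) auto
  qed
  then have "eventually (\<lambda>t. \<forall>l\<in>{..<m}. 0 \<le> u l + t * e l \<and> u l + t * e l \<le> 1) (at_right 0)"
    by (intro eventually_ball_finite) auto
  then obtain b where "0 < b" "\<forall>t>0. t < b \<longrightarrow> (\<forall>l<m. 0 \<le> u l + t * e l \<and> u l + t * e l \<le> 1)"
    unfolding eventually_at_right_field by auto
  moreover have "0 < b / 2" "b / 2 < b" using \<open>0 < b\<close> by simp_all
  ultimately show ?thesis by blast
qed

lemma sum_three_support:
  fixes f e :: "nat \<Rightarrow> real"
  assumes "i < m" "j < m" "k < m" "i \<noteq> j" "j \<noteq> k" "i \<noteq> k"
    and "\<forall>l. l \<notin> {i, j, k} \<longrightarrow> e l = 0"
  shows "(\<Sum>l<m. f l * e l) = f i * e i + f j * e j + f k * e k"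
proof -
  have "(\<Sum>l<m. f l * e l) = (\<Sum>l\<in>{i, j, k}. f l * e l)"
    using assms by (intro sum.mono_neutral_right) auto
  then show ?thesis using assms by simp
qed

lemma col_comb_add_scaled:
  "col_comb m C (\<lambda>l. u l + t * e l) = col_comb m C u + t *\<^sub>R col_comb m C e"
  by (simp add: col_comb_def algebra_simps sum.distrib sum_distrib_left)

definition second_moment :: "nat \<Rightarrow> (bool \<Rightarrow> nat \<Rightarrow> real) \<Rightarrow> (nat \<Rightarrow> real) \<Rightarrow> real" where
  "second_moment m C u = (\<Sum>l<m. C True l ^ 2 / col_mass C l * u l)"

lemma second_moment_add_scaled:
  "second_moment m C (\<lambda>l. u l + t * e l) = second_moment m C u + t * second_moment m C e"
  unfolding second_moment_def sum_distrib_left sum.distrib[symmetric]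
  by (rule sum.cong) (simp_all add: algebra_simps add_divide_distrib)

lemma col_times_div_mass:
  assumes "0 < col_mass C j"
  shows "C True j * (x / col_mass C j) = col_ratio C j * x"
    and "C False j * (x / col_mass C j) = (1 - col_ratio C j) * x"
    and "C True j ^ 2 / col_mass C j * (x / col_mass C j) = col_ratio C j ^ 2 * x"
  using assms unfolding col_ratio_def col_mass_def by (simp_all add: field_simps power2_eq_square)

text \<open>Shifting weight from columns i and k to a column j of intermediate likelihood ratio, in the
  proportions that keep both row sums fixed, strictly decreases the second moment: this is the
  strict convexity of the square function.\<close>
lemma exchange_lowers_second_moment:
  assumes u: "\<forall>l<m. 0 \<le> u l \<and> u l \<le> 1" and ijk: "i < m" "j < m" "k < m"
    and mass: "0 < col_mass C i" "0 < col_mass C j" "0 < col_mass C k"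
    and ord: "col_ratio C i < col_ratio C j" "col_ratio C j < col_ratio C k"
    and uu: "0 < u i" "0 < u k" "u j < 1"
  shows "\<exists>w. (\<forall>l<m. 0 \<le> w l \<and> w l \<le> 1) \<and> col_comb m C w = col_comb m C u \<and>
             second_moment m C w < second_moment m C u"
proof -
  define ri rj rk where "ri = col_ratio C i" and "rj = col_ratio C j" and "rk = col_ratio C k"
  have dist: "i \<noteq> j" "j \<noteq> k" "i \<noteq> k" using ord by auto
  define d where "d l = (if l = i then - (rk - rj) else if l = j then rk - ri
      else if l = k then - (rj - ri) else 0)" for l
  define e where "e l = d l / col_mass C l" for l
  have e_sum: "(\<Sum>l<m. f l * e l) = f i * e i + f j * e j + f k * e k" for f
    using dist by (intro sum_three_support ijk) (auto simp: e_def d_def)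
  have d_at: "d i = - (rk - rj)" "d j = rk - ri" "d k = - (rj - ri)"
    using dist by (simp_all add: d_def)
  have "\<forall>l<m. (e l < 0 \<longrightarrow> 0 < u l) \<and> (0 < e l \<longrightarrow> u l < 1)"
    using uu ord mass dist unfolding e_def d_def ri_def rj_def rk_def
    by (auto simp: divide_less_0_iff zero_less_divide_iff)
  then obtain t where t: "0 < t" "\<forall>l<m. 0 \<le> u l + t * e l \<and> u l + t * e l \<le> 1"
    using small_step_in_cube[OF u] by blast
  note col = col_times_div_mass[OF mass(1)] col_times_div_mass[OF mass(2)] col_times_div_mass[OF mass(3)]
  have "(\<Sum>l<m. C True l * e l) = 0" "(\<Sum>l<m. C False l * e l) = 0"
    unfolding e_sum unfolding e_def col d_at ri_def [symmetric] rj_def [symmetric] rk_def [symmetric]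
    by (simp_all add: algebra_simps)
  then have "col_comb m C (\<lambda>l. u l + t * e l) = col_comb m C u"
    by (simp add: col_comb_add_scaled col_comb_def)
  moreover have "(\<Sum>l<m. C True l ^ 2 / col_mass C l * e l) = - ((rk - rj) * (rj - ri) * (rk - ri))"
    unfolding e_sum unfolding e_def col d_at ri_def [symmetric] rj_def [symmetric] rk_def [symmetric]
    by (simp add: algebra_simps power2_eq_square)
  then have "second_moment m C (\<lambda>l. u l + t * e l)
      = second_moment m C u - t * ((rk - rj) * (rj - ri) * (rk - ri))"
    by (simp add: second_moment_add_scaled second_moment_def)
  moreover have "0 < t * ((rk - rj) * (rj - ri) * (rk - ri))"
    using t(1) ord unfolding ri_def rj_def rk_def by simp
  ultimately show ?thesis using t(2) by (intro exI[of _ "\<lambda>l. u l + t * e l"]) auto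
qed

lemma continuous_on_second_moment: "continuous_on A (second_moment m C)"
  unfolding second_moment_def
  by (intro continuous_on_sum continuous_on_mult continuous_on_const ballI
      continuous_on_subset[OF continuous_on_product_coordinates]) simp_all

lemma exists_min_second_moment_preimage:
  assumes "p \<in> zonotope m C"
  shows "\<exists>u. (\<forall>j<m. 0 \<le> u j \<and> u j \<le> 1) \<and> col_comb m C u = p \<and>
      (\<forall>w. (\<forall>j<m. 0 \<le> w j \<and> w j \<le> 1) \<and> col_comb m C w = p \<longrightarrow> second_moment m C u \<le> second_moment m C w)"
proof -
  define R where "R = unit_cube m \<inter> {u. col_comb m C u = p}"
  have "compact R" unfolding R_def
    by (intro compact_Int_closed compact_unit_cube closed_Collect_eq continuous_on_col_comb
        continuous_on_const)
  moreover have "R \<noteq> {}" using assms by (auto simp: R_def zonotope_def)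
  ultimately obtain u where u: "u \<in> R" "\<forall>w\<in>R. second_moment m C u \<le> second_moment m C w"
    using continuous_attains_inf[OF _ _ continuous_on_second_moment] by blast
  have "second_moment m C u \<le> second_moment m C w"
    if w: "\<forall>j<m. 0 \<le> w j \<and> w j \<le> 1" "col_comb m C w = p" for w
  proof -
    define w' where "w' j = (if j < m then w j else 0)" for j
    have "col_comb m C w' = p" using w(2) col_comb_cong[of m w' w C] by (simp add: w'_def)
    then have "w' \<in> R" using w(1) by (simp add: R_def mem_unit_cube w'_def)
    moreover have "second_moment m C w' = second_moment m C w"
      unfolding second_moment_def w'_def by (rule sum.cong) simp_all
    ultimately show ?thesis using u(2) by force
  qed
  moreover have "\<forall>j<m. 0 \<le> u j \<and> u j \<le> 1" "col_comb m C u = p"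
    using u(1) by (simp_all add: R_def mem_unit_cube)
  ultimately show ?thesis by blast
qed

text \<open>A preimage of minimal second moment selects a ratio interval: otherwise the exchange
  lemma would lower its second moment further.\<close>
lemma exists_interval_preimage:
  assumes "p \<in> zonotope m C"
  shows "\<exists>u rs re. (\<forall>j<m. 0 \<le> u j \<and> u j \<le> 1) \<and> col_comb m C u = p \<and> selects_ratio_interval m C u rs re"
proof -
  obtain u where u: "\<forall>j<m. 0 \<le> u j \<and> u j \<le> 1" "col_comb m C u = p"
    and min: "\<And>w. \<forall>j<m. 0 \<le> w j \<and> w j \<le> 1 \<Longrightarrow> col_comb m C w = p \<Longrightarrow> second_moment m C u \<le> second_moment m C w"
    using exists_min_second_moment_preimage[OF assms] by blast
  define J where "J = {j. j < m \<and> 0 < col_mass C j \<and> 0 < u j}"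
  show ?thesis
  proof (cases "J = {}")
    case True
    then have "selects_ratio_interval m C u 0 0" unfolding selects_ratio_interval_def J_def by auto
    then show ?thesis using u by blast
  next
    case False
    have fin: "finite (col_ratio C ` J)" by (simp add: J_def)
    define rs where "rs = Min (col_ratio C ` J)"
    define re where "re = Max (col_ratio C ` J)"
    have "rs \<in> col_ratio C ` J" "re \<in> col_ratio C ` J"
      using Min_in[OF fin] Max_in[OF fin] False unfolding rs_def re_def by auto
    then obtain i k where i: "i \<in> J" "col_ratio C i = rs" and k: "k \<in> J" "col_ratio C k = re"
      by (metis imageE)
    have iJ: "i < m" "0 < col_mass C i" "0 < u i" and kJ: "k < m" "0 < col_mass C k" "0 < u k"
      using i(1) k(1) unfolding J_def by auto
    have inside: "rs \<le> col_ratio C j \<and> col_ratio C j \<le> re" if "j \<in> J" for j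
      using that fin unfolding rs_def re_def by simp
    have outside: "col_ratio C j \<le> rs \<or> re \<le> col_ratio C j"
      if j: "j < m" "0 < col_mass C j" "u j < 1" for j
    proof (rule ccontr)
      assume "\<not> ?thesis"
      then have "col_ratio C i < col_ratio C j" "col_ratio C j < col_ratio C k" using i k by auto
      then obtain w where w: "\<forall>l<m. 0 \<le> w l \<and> w l \<le> 1" "col_comb m C w = p"
        "second_moment m C w < second_moment m C u"
        using exchange_lowers_second_moment[OF u(1) iJ(1) j(1) kJ(1) iJ(2) j(2) kJ(2) _ _ iJ(3) kJ(3) j(3)]
          u(2) by auto
      then show False using min[OF w(1,2)] w(3) by linarith
    qed
    have "rs \<le> re" using inside[OF i(1)] by linarith
    moreover have "\<forall>j<m. 0 < col_mass C j \<longrightarrow> 0 < u j \<longrightarrow> rs \<le> col_ratio C j \<and> col_ratio C j \<le> re"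
      using inside unfolding J_def by blast
    ultimately have "selects_ratio_interval m C u rs re"
      unfolding selects_ratio_interval_def using outside by blast
    then show ?thesis using u by blast
  qed
qed

lemma col_comb_Suc: "col_comb (Suc k) G v = col_comb k G v + (G False k * v k, G True k * v k)"
  by (simp add: col_comb_def)

lemma zonotope_peel_last_col:
  assumes nonneg: "\<forall>j<m. \<forall>r. 0 \<le> C r j" and sub: "zonotope (Suc k) G \<subseteq> zonotope m C"
    and u: "\<forall>j<m. 0 \<le> u j \<and> u j \<le> 1" and last: "col_comb m C u = (G False k, G True k)"
    and sel: "selects_ratio_interval m C u rs re"
  shows "zonotope k G \<subseteq> zonotope m (\<lambda>r j. C r j * (1 - u j))"
proof
  fix p assume "p \<in> zonotope k G"
  then obtain v where v: "\<forall>l<k. 0 \<le> v l \<and> v l \<le> 1" "col_comb k G v = p"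
    unfolding mem_zonotope by blast
  have ext: "col_comb (Suc k) G (v(k := c)) = p + (G False k * c, G True k * c)" for c
    unfolding col_comb_Suc using v(2) col_comb_cong[of k "v(k := c)" v G] by simp
  have "col_comb (Suc k) G (v(k := c)) \<in> zonotope m C" if "0 \<le> c" "c \<le> 1" for c
    using sub col_comb_in_zonotope[of "Suc k" "v(k := c)" G] v(1) that by (auto simp: less_Suc_eq)
  from this[of 0] this[of 1] have "p \<in> zonotope m C" "p + col_comb m C u \<in> zonotope m C"
    unfolding ext last by (simp_all add: zero_prod_def[symmetric])
  then show "p \<in> zonotope m (\<lambda>r j. C r j * (1 - u j))"
    by (rule zonotope_remove_interval[OF nonneg u sel])
qed

lemma row_stochastic_extend:
  assumes "row_stochastic m k W" "\<forall>j<m. 0 \<le> u j \<and> u j \<le> 1"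
  shows "row_stochastic m (Suc k) (\<lambda>j l. if l = k then u j else (1 - u j) * W j l)"
  unfolding row_stochastic_def
proof (intro allI impI)
  fix j assume j: "j < m"
  then have W: "\<forall>l<k. 0 \<le> W j l" "(\<Sum>l<k. W j l) = 1" and "0 \<le> u j" "u j \<le> 1"
    using assms unfolding row_stochastic_def by auto
  then have "\<forall>l<Suc k. 0 \<le> (if l = k then u j else (1 - u j) * W j l)"
    by (auto simp: less_Suc_eq)
  moreover have "(\<Sum>l<k. (if l = k then u j else (1 - u j) * W j l)) = (1 - u j) * (\<Sum>l<k. W j l)"
    by (simp add: sum_distrib_left)
  ultimately show "(\<forall>l<Suc k. 0 \<le> (if l = k then u j else (1 - u j) * W j l)) \<and>
      (\<Sum>l<Suc k. (if l = k then u j else (1 - u j) * W j l)) = 1"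
    using W(2) by simp
qed

text \<open>Induction on the columns of G: the last one is realised by a preimage selecting a ratio
  interval, and removing that preimage leaves a channel whose zonotope still contains the
  zonotope of the remaining columns.\<close>
theorem factorization_of_zonotope_subset:
  assumes "0 < k" "\<forall>j<m. \<forall>r. 0 \<le> C r j" "\<forall>r. (\<Sum>j<m. C r j) = (\<Sum>l<k. G r l)"
    and "zonotope k G \<subseteq> zonotope m C"
  shows "\<exists>W. row_stochastic m k W \<and> (\<forall>r. \<forall>l<k. (\<Sum>j<m. C r j * W j l) = G r l)"
  using assms
proof (induction k arbitrary: C rule: nat_induct_non_zero)
  case 1
  then show ?case by (intro exI[of _ "\<lambda>j l. 1"]) (simp add: row_stochastic_def)
next
  case (Suc k)
  have "(G False k, G True k) \<in> zonotope (Suc k) G"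
    using col_comb_in_zonotope[of "Suc k" "\<lambda>l. if l = k then 1 else 0" G] by (simp add: col_comb_def)
  then obtain u rs re where u: "\<forall>j<m. 0 \<le> u j \<and> u j \<le> 1" "col_comb m C u = (G False k, G True k)"
    and sel: "selects_ratio_interval m C u rs re"
    using Suc.prems(3) exists_interval_preimage by blast
  let ?C' = "\<lambda>r j. C r j * (1 - u j)"
  have "\<forall>j<m. \<forall>r. 0 \<le> ?C' r j" using Suc.prems(1) u(1) by simp
  moreover have "\<forall>r. (\<Sum>j<m. ?C' r j) = (\<Sum>l<k. G r l)"
  proof
    fix r
    have "(\<Sum>j<m. C r j * u j) = G r k" using u(2) by (cases r) (simp_all add: col_comb_def)
    then show "(\<Sum>j<m. ?C' r j) = (\<Sum>l<k. G r l)"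
      using Suc.prems(2) by (simp add: algebra_simps sum_subtractf)
  qed
  moreover have "zonotope k G \<subseteq> zonotope m ?C'"
    by (rule zonotope_peel_last_col[OF Suc.prems(1) Suc.prems(3) u sel])
  ultimately obtain W where W: "row_stochastic m k W" "\<forall>r. \<forall>l<k. (\<Sum>j<m. ?C' r j * W j l) = G r l"
    using Suc.IH[of ?C'] by blast
  let ?W = "\<lambda>j l. if l = k then u j else (1 - u j) * W j l"
  have "(\<Sum>j<m. C r j * ?W j l) = G r l" if "l < Suc k" for r l
  proof (cases "l = k")
    case True
    then show ?thesis using u(2) by (cases r) (simp_all add: col_comb_def)
  next
    case False
    then show ?thesis using W(2) that by (simp add: mult.assoc)
  qed
  then show ?case using row_stochastic_extend[OF W(1) u(1)] by blast
qed

lemma refines_of_zonotope_subset: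
  assumes H: "is_channel2 (m, C)" and G: "is_channel2 (k, G)" and sub: "zonotope k G \<subseteq> zonotope m C"
  shows "refines (m, C) (k, G)"
proof -
  have tot: "(\<Sum>j<m. C r j) = 1" "(\<Sum>l<k. G r l) = 1" for r
    using H G unfolding is_channel2_def by simp_all
  then have "0 < k" by (metis lessThan_0 gr0I sum.empty zero_neq_one)
  then show ?thesis
    using factorization_of_zonotope_subset[OF _ _ _ sub] H tot
    unfolding Defs.refines_def is_channel2_def by simp
qed

definition first_col :: "channel2 \<Rightarrow> real \<times> real" where
  "first_col M = (snd M False 0, snd M True 0)"

lemma first_col_in_unit_square:
  assumes "is_channel2 M" "fst M = 2"
  shows "first_col M \<in> {0..1} \<times> {0..1}"
proof -
  have "0 \<le> snd M r 0" "0 \<le> snd M r 1" "snd M r 0 + snd M r 1 = 1" for r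
    using assms unfolding is_channel2_def by (simp_all add: numeral_2_eq_2)
  then show ?thesis unfolding first_col_def by (simp add: add_nonneg_eq_0_iff) (smt (verit))
qed

lemma refines_two_cols_iff:
  assumes H: "is_channel2 (m, C)" and M: "is_channel2 M" "fst M = 2"
  shows "refines (m, C) M \<longleftrightarrow> first_col M \<in> zonotope m C"
  unfolding first_col_def
proof
  assume "refines (m, C) M"
  then obtain W where W: "row_stochastic m 2 W" "\<forall>r. \<forall>k<2. (\<Sum>j<m. C r j * W j k) = snd M r k"
    using M(2) unfolding Defs.refines_def by auto
  have "\<forall>j<m. 0 \<le> W j 0 \<and> W j 0 \<le> 1"
  proof (intro allI impI)
    fix j assume "j < m"
    then have "0 \<le> W j 0" "0 \<le> W j 1" "W j 0 + W j 1 = 1"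
      using W(1) unfolding row_stochastic_def by (auto simp: numeral_2_eq_2)
    then show "0 \<le> W j 0 \<and> W j 0 \<le> 1" by simp
  qed
  moreover have "col_comb m C (\<lambda>j. W j 0) = (snd M False 0, snd M True 0)"
    using W(2) by (simp add: col_comb_def)
  ultimately show "(snd M False 0, snd M True 0) \<in> zonotope m C"
    by (metis col_comb_in_zonotope)
next
  assume "(snd M False 0, snd M True 0) \<in> zonotope m C"
  then obtain v where v: "\<forall>j<m. 0 \<le> v j \<and> v j \<le> 1" "col_comb m C v = (snd M False 0, snd M True 0)"
    unfolding mem_zonotope by blast
  have col0: "(\<Sum>j<m. C r j * v j) = snd M r 0" for r
    using v(2) by (cases r) (simp_all add: col_comb_def)
  define W where "W j c = (if c = 0 then v j else 1 - v j)" for j and c :: nat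
  have "row_stochastic m 2 W" using v(1) by (simp add: row_stochastic_def W_def numeral_2_eq_2)
  moreover have "(\<Sum>j<m. C r j * W j c) = snd M r c" if "c < 2" for r c
  proof (cases "c = 0")
    case False
    then have "c = 1" using that by simp
    have "(\<Sum>j<m. C r j * W j c) = (\<Sum>j<m. C r j) - (\<Sum>j<m. C r j * v j)"
      using False by (simp add: W_def algebra_simps sum_subtractf)
    also have "\<dots> = snd M r 1"
    proof -
      have "snd M r 0 + snd M r 1 = 1" "(\<Sum>j<m. C r j) = 1"
        using H M unfolding is_channel2_def by (simp_all add: numeral_2_eq_2)
      then show ?thesis using col0[of r] by simp
    qed
    finally show ?thesis using \<open>c = 1\<close> by simp
  qed (simp add: W_def col0)
  ultimately show "refines (m, C) M" unfolding Defs.refines_def using M(2) by auto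
qed

section \<open>The channel of a lower convex hull\<close>

definition lower_boundary :: "(real \<times> real) set \<Rightarrow> (real \<Rightarrow> real) \<Rightarrow> bool" where
  "lower_boundary A \<phi> \<longleftrightarrow> (\<forall>x\<in>{0..1}. (x, \<phi> x) \<in> A \<and> (\<forall>y. (x, y) \<in> A \<longrightarrow> \<phi> x \<le> y))"

lemma lower_boundary_exists:
  assumes "compact A" "\<forall>x\<in>{0..1}. \<exists>y. (x, y) \<in> A"
  shows "\<exists>\<phi>. lower_boundary A \<phi>"
proof -
  have "\<exists>y. (x, y) \<in> A \<and> (\<forall>y'. (x, y') \<in> A \<longrightarrow> y \<le> y')" if x: "x \<in> {0..1}" for x
  proof -
    let ?T = "A \<inter> {p. fst p = x}"
    have "compact ?T" using assms(1)
      by (intro compact_Int_closed closed_Collect_eq continuous_on_fst continuous_on_id continuous_on_const)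
    moreover obtain y where "(x, y) \<in> A" using assms(2) x by blast
    then have "?T \<noteq> {}" by force
    ultimately obtain p where p: "p \<in> ?T" "\<forall>q\<in>?T. snd p \<le> snd q"
      using continuous_attains_inf[OF _ _ continuous_on_snd[OF continuous_on_id]] by blast
    then have "(x, snd p) \<in> A" by (cases p) auto
    moreover have "\<forall>y'. (x, y') \<in> A \<longrightarrow> snd p \<le> y'" using p(2) by force
    ultimately show ?thesis by blast
  qed
  then have "\<forall>x\<in>{0..1}. \<exists>y. (x, y) \<in> A \<and> (\<forall>y'. (x, y') \<in> A \<longrightarrow> y \<le> y')" by blast
  then show ?thesis unfolding lower_boundary_def by (rule bchoice)
qed

lemma convex_on_lower_boundary:
  assumes "convex A" "lower_boundary A \<phi>"
  shows "convex_on {0..1} \<phi>"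
proof (rule convex_onI)
  fix t x y :: real assume t: "0 < t" "t < 1" and xy: "x \<in> {0..1}" "y \<in> {0..1}"
  have "(1 - t) *\<^sub>R (x, \<phi> x) + t *\<^sub>R (y, \<phi> y) \<in> A"
    using assms xy t unfolding lower_boundary_def by (intro convexD) auto
  moreover have "(1 - t) *\<^sub>R x + t *\<^sub>R y \<in> {0..1}"
    using xy t convexD[OF convex_real_interval(5)[of 0 1], of x y "1 - t" t] by simp
  ultimately show "\<phi> ((1 - t) *\<^sub>R x + t *\<^sub>R y) \<le> (1 - t) * \<phi> x + t * \<phi> y"
    using assms(2) unfolding lower_boundary_def by simp
qed simp

lemma convex_on_mono_from_zero:
  fixes f :: "real \<Rightarrow> real"
  assumes f: "convex_on {0..1} f" "f 0 = 0" "\<forall>x\<in>{0..1}. 0 \<le> f x"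
    and ab: "0 \<le> a" "a \<le> b" "b \<le> 1"
  shows "f a \<le> f b"
proof (cases "a = 0 \<or> a = b")
  case False
  then have "0 < a" "a < b" using ab by auto
  have "f ((1 - a / b) *\<^sub>R 0 + (a / b) *\<^sub>R b) \<le> (1 - a / b) * f 0 + (a / b) * f b"
    using ab \<open>0 < a\<close> by (intro convex_onD[OF f(1)]) auto
  then have "f a \<le> (a / b) * f b" using \<open>a < b\<close> \<open>0 < a\<close> f(2) by simp
  also have "\<dots> \<le> f b" using f(3) ab \<open>a < b\<close> \<open>0 < a\<close> by (intro mult_left_le_one_le) auto
  finally show ?thesis .
qed (use f ab in auto)

lemma convex_on_chord_slopes_mono:
  fixes f :: "real \<Rightarrow> real"
  assumes f: "convex_on I f" and I: "a \<in> I" "b \<in> I" "d \<in> I" and abcd: "a < b" "b \<le> c" "c < d"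
  shows "(f b - f a) / (b - a) \<le> (f d - f c) / (d - c)"
proof -
  have flip: "(p - q) / (r - s) = (q - p) / (s - r)" for p q r s :: real
    by (metis minus_diff_eq minus_divide_divide)
  have "(f b - f a) / (b - a) \<le> (f d - f b) / (d - b)"
    using convex_on_slope_le[OF f I(1) I(3), of b] abcd unfolding flip[of "f a"] flip[of "f b" "f d"]
    by linarith
  also have "\<dots> \<le> (f d - f c) / (d - c)"
  proof (cases "b = c")
    case False
    then show ?thesis
      using convex_on_slope_le(2)[OF f I(2) I(3), of c] abcd unfolding flip[of "f b"] flip[of "f c"] by simp
  qed simp
  finally show ?thesis .
qed

definition slopes_sorted :: "nat \<Rightarrow> (bool \<Rightarrow> nat \<Rightarrow> real) \<Rightarrow> bool" where
  "slopes_sorted K G \<longleftrightarrow> (\<forall>l l'. l < l' \<longrightarrow> l' < K \<longrightarrow> G True l * G False l' \<le> G True l' * G False l)"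

text \<open>The identity x0 (a x1 + b y1) - x1 (a x0 + b y0) = b (x0 y1 - x1 y0) compares the
  functional (a, b) on two columns of nonnegative entries ordered by slope.\<close>
lemma functional_sign_sorted_cols:
  fixes x0 y0 x1 y1 a b :: real
  assumes nonneg: "0 \<le> x0" "0 \<le> y0" "0 \<le> x1" "0 \<le> y1" and sorted: "y0 * x1 \<le> y1 * x0"
  shows "0 \<le> b \<Longrightarrow> 0 < a * x0 + b * y0 \<Longrightarrow> 0 \<le> a * x1 + b * y1"
    and "b \<le> 0 \<Longrightarrow> a * x0 + b * y0 < 0 \<Longrightarrow> a * x1 + b * y1 \<le> 0"
proof -
  have id: "x0 * (a * x1 + b * y1) - x1 * (a * x0 + b * y0) = b * (y1 * x0 - y0 * x1)"
    by (simp add: algebra_simps)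
  have zero: "x1 = 0" if "x0 = 0" "y0 \<noteq> 0"
    using sorted nonneg that by (simp add: mult_le_0_iff)
  show "0 \<le> b \<Longrightarrow> 0 < a * x0 + b * y0 \<Longrightarrow> 0 \<le> a * x1 + b * y1"
  proof (cases "x0 = 0")
    case False
    assume "0 \<le> b" "0 < a * x0 + b * y0"
    then have "0 \<le> x0 * (a * x1 + b * y1)"
      using id sorted nonneg by (smt (verit) mult_nonneg_nonneg)
    then show ?thesis using False nonneg by (simp add: zero_le_mult_iff)
  next
    case True
    assume "0 \<le> b" "0 < a * x0 + b * y0"
    then have "x1 = 0" using zero True by (metis mult_zero_right add_0 less_irrefl)
    then show ?thesis using \<open>0 \<le> b\<close> nonneg by simp
  qed
  show "b \<le> 0 \<Longrightarrow> a * x0 + b * y0 < 0 \<Longrightarrow> a * x1 + b * y1 \<le> 0"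
  proof (cases "x0 = 0")
    case False
    assume "b \<le> 0" "a * x0 + b * y0 < 0"
    then have "x0 * (a * x1 + b * y1) \<le> 0"
      using id sorted nonneg by (smt (verit) mult_nonneg_nonpos mult_nonpos_nonneg)
    then show ?thesis using False nonneg by (simp add: mult_le_0_iff)
  next
    case True
    assume "b \<le> 0" "a * x0 + b * y0 < 0"
    then have "x1 = 0" using zero True by (metis mult_zero_right add_0 less_irrefl)
    then show ?thesis using \<open>b \<le> 0\<close> nonneg by (simp add: mult_nonpos_nonneg)
  qed
qed

lemma sign_changes_once:
  fixes f :: "nat \<Rightarrow> real"
  assumes "\<forall>l l'. l < l' \<longrightarrow> l' < K \<longrightarrow> 0 < f l \<longrightarrow> 0 \<le> f l'"
  shows "\<exists>s\<le>K. (\<forall>l<s. f l \<le> 0) \<and> (\<forall>l. s \<le> l \<longrightarrow> l < K \<longrightarrow> 0 \<le> f l)"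
proof (cases "\<exists>l<K. 0 < f l")
  case True
  define s where "s = (LEAST l. l < K \<and> 0 < f l)"
  have s: "s < K" "0 < f s" using LeastI_ex[OF True] unfolding s_def by auto
  have "\<forall>l<s. f l \<le> 0" using not_less_Least s(1) unfolding s_def by fastforce
  moreover have "0 \<le> f l" if "s \<le> l" "l < K" for l
  proof (cases "s = l")
    case False
    then have "s < l" using that(1) by simp
    then show ?thesis using assms s(2) that(2) by blast
  qed (use s in simp)
  ultimately show ?thesis using s(1) by (intro exI[of _ s]) auto
next
  case False
  then show ?thesis by (intro exI[of _ K]) (auto simp: not_less dest: leD)
qed

lemma col_comb_prefix: "s \<le> K \<Longrightarrow> col_comb K G (\<lambda>l. if l < s then 1 else 0) = col_sum s G"
  unfolding col_comb_def col_sum_def by (simp, intro conjI; rule sum.mono_neutral_cong_right) auto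

lemma col_comb_suffix:
  assumes "s \<le> K"
  shows "col_comb K G (\<lambda>l. if s \<le> l then 1 else 0) = col_sum K G - col_sum s G"
proof -
  have "col_comb K G (\<lambda>l. if s \<le> l then 1 else 0) = col_comb K G (\<lambda>l. 1 - (if l < s then 1 else 0))"
    by (rule col_comb_cong) simp
  also have "\<dots> = col_sum K G - col_comb K G (\<lambda>l. if l < s then 1 else 0)"
    by (simp add: col_comb_def col_sum_def algebra_simps sum_subtractf)
  finally show ?thesis using col_comb_prefix[OF assms] by simp
qed

lemma col_sum_prefix_in_zonotope: "s \<le> K \<Longrightarrow> col_sum s G \<in> zonotope K G"
  using col_comb_in_zonotope[of K "\<lambda>l. if l < s then 1 else 0" G] col_comb_prefix by simp

lemma sorted_slopes_support_at_vertex: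
  assumes nonneg: "\<forall>l<K. \<forall>r. 0 \<le> G r l" and sorted: "slopes_sorted K G"
  shows "\<exists>s\<le>K.
    zonotope_support K G a b = a * fst (col_sum s G) + b * snd (col_sum s G) \<or>
    zonotope_support K G a b = a * fst (col_sum K G - col_sum s G) + b * snd (col_sum K G - col_sum s G)"
proof -
  define f where "f l = a * G False l + b * G True l" for l
  note sign = functional_sign_sorted_cols[of "G False l" "G True l" "G False l'" "G True l'" b a for l l']
  have col: "0 \<le> G False l" "0 \<le> G True l" "0 \<le> G False l'" "0 \<le> G True l'"
    "G True l * G False l' \<le> G True l' * G False l" if "l < l'" "l' < K" for l l'
    using nonneg sorted that unfolding slopes_sorted_def by auto
  show ?thesis
  proof (cases "0 \<le> b")
    case True
    have "0 \<le> f l'" if "l < l'" "l' < K" "0 < f l" for l l'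
      using sign(1)[OF col[OF that(1,2)] True] that(3) unfolding f_def by simp
    then have "\<forall>l l'. l < l' \<longrightarrow> l' < K \<longrightarrow> 0 < f l \<longrightarrow> 0 \<le> f l'" by blast
    then obtain s where s: "s \<le> K" "\<forall>l<s. f l \<le> 0" "\<forall>l. s \<le> l \<longrightarrow> l < K \<longrightarrow> 0 \<le> f l"
      using sign_changes_once by blast
    have "zonotope_support K G a b = a * fst (col_comb K G (\<lambda>l. if s \<le> l then 1 else 0))
        + b * snd (col_comb K G (\<lambda>l. if s \<le> l then 1 else 0))"
      unfolding col_comb_functional zonotope_support_def
      by (rule sum.cong) (use s in \<open>auto simp: f_def not_le\<close>)
    then show ?thesis unfolding col_comb_suffix[OF s(1)] using s(1) by blast
  next
    case False
    have "f l' \<le> 0" if "l < l'" "l' < K" "f l < 0" for l l'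
      using sign(2)[OF col[OF that(1,2)]] False that(3) unfolding f_def by simp
    then have "\<forall>l l'. l < l' \<longrightarrow> l' < K \<longrightarrow> 0 < - f l \<longrightarrow> 0 \<le> - f l'" by force
    then obtain s where s: "s \<le> K" "\<forall>l<s. 0 \<le> f l" "\<forall>l. s \<le> l \<longrightarrow> l < K \<longrightarrow> f l \<le> 0"
      using sign_changes_once[of K "\<lambda>l. - f l"] by auto
    have "zonotope_support K G a b = a * fst (col_comb K G (\<lambda>l. if l < s then 1 else 0))
        + b * snd (col_comb K G (\<lambda>l. if l < s then 1 else 0))"
      unfolding col_comb_functional zonotope_support_def
      by (rule sum.cong) (use s in \<open>auto simp: f_def not_less\<close>)
    then show ?thesis unfolding col_comb_prefix[OF s(1)] using s(1) by blast
  qed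
qed

text \<open>For columns sorted by slope the zonotope is the polygon spanned by the partial sums
  taken from either end, so containing those vertices suffices.\<close>
lemma zonotope_subset_of_sorted_slopes:
  assumes nonneg: "\<forall>l<K. \<forall>r. 0 \<le> G r l" and sorted: "slopes_sorted K G"
    and prefix: "\<forall>s\<le>K. col_sum s G \<in> zonotope m C"
    and suffix: "\<forall>s\<le>K. col_sum K G - col_sum s G \<in> zonotope m C"
  shows "zonotope K G \<subseteq> zonotope m C"
proof
  fix p assume p: "p \<in> zonotope K G"
  show "p \<in> zonotope m C" unfolding in_zonotope_iff_support
  proof (intro allI)
    fix a b
    have "a * fst p + b * snd p \<le> zonotope_support K G a b"
      using p in_zonotope_iff_support by blast
    also have "\<dots> \<le> zonotope_support m C a b"
      using sorted_slopes_support_at_vertex[OF nonneg sorted, of a b] prefix suffix in_zonotope_iff_support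
      by fastforce
    finally show "a * fst p + b * snd p \<le> zonotope_support m C a b" .
  qed
qed

definition path_channel :: "(nat \<Rightarrow> real \<times> real) \<Rightarrow> bool \<Rightarrow> nat \<Rightarrow> real" where
  "path_channel P r l = (if r then snd (P (Suc l) - P l) else fst (P (Suc l) - P l))"

lemma col_sum_path_channel: "col_sum s (path_channel P) = P s - P 0"
  using sum_lessThan_telescope[of "\<lambda>l. fst (P l)" s] sum_lessThan_telescope[of "\<lambda>l. snd (P l)" s]
  by (simp add: col_sum_def path_channel_def prod_eq_iff)

lemma convex_vertical_between:
  fixes y y1 y2 :: real
  assumes "convex A" "(x, y1) \<in> A" "(x, y2) \<in> A" "y1 \<le> y" "y \<le> y2"
  shows "(x, y) \<in> A"
proof (cases "y1 = y2")
  case False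
  define t where "t = (y - y1) / (y2 - y1)"
  have t: "0 \<le> t" "t \<le> 1" using assms False by (auto simp: t_def)
  have "(1 - t) *\<^sub>R (x, y1) + t *\<^sub>R (x, y2) \<in> A"
    using assms t by (intro convexD) auto
  moreover have "t * (y2 - y1) = y - y1"
    using False by (simp add: t_def)
  then have "(1 - t) * y1 + t * y2 = y"
    by (simp add: algebra_simps)
  ultimately show ?thesis by (simp add: algebra_simps)
qed (use assms in simp)

locale lower_hull =
  fixes S :: "(real \<times> real) set" and \<phi> :: "real \<Rightarrow> real"
  assumes finite_S: "finite S"
    and zero_in_S: "(0, 0) \<in> S" and one_in_S: "(1, 1) \<in> S"
    and S_unit_square: "S \<subseteq> {0..1} \<times> {0..1}"
    and S_symmetric: "\<forall>p\<in>S. (1, 1) - p \<in> S"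
    and lower: "lower_boundary (convex hull S) \<phi>"
begin

lemma phi_in_hull: "x \<in> {0..1} \<Longrightarrow> (x, \<phi> x) \<in> convex hull S"
  and phi_le: "x \<in> {0..1} \<Longrightarrow> (x, y) \<in> convex hull S \<Longrightarrow> \<phi> x \<le> y"
  using lower unfolding lower_boundary_def by auto

lemma hull_unit_square: "convex hull S \<subseteq> {0..1} \<times> {0..1}"
  using S_unit_square by (intro hull_minimal convex_Times) auto

lemma phi_nonneg: "x \<in> {0..1} \<Longrightarrow> 0 \<le> \<phi> x"
  using phi_in_hull hull_unit_square by force

lemma phi_zero: "\<phi> 0 = 0"
  using phi_le[of 0 0] phi_nonneg[of 0] zero_in_S hull_subset by fastforce

lemma phi_one: "\<phi> 1 \<le> 1"
  using phi_le[of 1 1] one_in_S hull_subset by fastforce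

lemma phi_convex: "convex_on {0..1} \<phi>"
  by (rule convex_on_lower_boundary[OF convex_convex_hull lower])

lemma phi_mono: "0 \<le> a \<Longrightarrow> a \<le> b \<Longrightarrow> b \<le> 1 \<Longrightarrow> \<phi> a \<le> \<phi> b"
  using convex_on_mono_from_zero[OF phi_convex phi_zero] phi_nonneg by auto

definition breaks :: "real list" where
  "breaks = sorted_list_of_set (fst ` S)"

abbreviation K :: nat where
  "K \<equiv> length breaks"

lemma set_breaks: "set breaks = fst ` S"
  using finite_S by (simp add: breaks_def)

lemma breaks_less: "i < j \<Longrightarrow> j < K \<Longrightarrow> breaks ! i < breaks ! j"
  using sorted_wrt_nth_less[OF strict_sorted_list_of_set] unfolding breaks_def by blast

lemma two_le_K: "2 \<le> K"
proof -
  have "{0, 1} \<subseteq> set breaks" using zero_in_S one_in_S set_breaks by force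
  then have "card {0 :: real, 1} \<le> card (set breaks)" by (intro card_mono) auto
  then show ?thesis using card_length[of breaks] by simp
qed

lemma K_pos [simp]: "0 < K" and breaks_nonempty [simp]: "breaks \<noteq> []"
  using two_le_K by auto

lemma breaks_range: "l < K \<Longrightarrow> breaks ! l \<in> {0..1}"
  using nth_mem[of l breaks] S_unit_square unfolding set_breaks by auto

lemma breaks_first: "breaks ! 0 = 0"
proof -
  obtain i where i: "i < K" "breaks ! i = 0"
    using zero_in_S set_breaks by (metis fst_conv image_eqI in_set_conv_nth)
  show ?thesis
  proof (cases "i = 0")
    case False
    then have "breaks ! 0 < 0" using breaks_less[of 0 i] i by simp
    moreover have "0 \<le> breaks ! 0" using breaks_range[of 0] i by simp
    ultimately show ?thesis by simp
  qed (use i in simp)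
qed

lemma breaks_last: "breaks ! (K - 1) = 1"
proof -
  obtain i where i: "i < K" "breaks ! i = 1"
    using one_in_S set_breaks by (metis fst_conv image_eqI in_set_conv_nth)
  show ?thesis
  proof (cases "i = K - 1")
    case False
    then have "1 < breaks ! (K - 1)" using breaks_less[of i "K - 1"] i by simp
    moreover have "breaks ! (K - 1) \<le> 1" using breaks_range[of "K - 1"] i by simp
    ultimately show ?thesis by simp
  qed (use i in simp)
qed

text \<open>The lower boundary of the hull is the polygon through vertex 0 = 0, ..., vertex (K - 1) =
  (1, \<phi> 1); the extra vertex K = (1, 1) adds the vertical edge, so the edges sum to (1, 1).\<close>
definition vertex :: "nat \<Rightarrow> real \<times> real" where
  "vertex l = (if l < K then (breaks ! l, \<phi> (breaks ! l)) else (1, 1))"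

definition hull_channel :: "bool \<Rightarrow> nat \<Rightarrow> real" where
  "hull_channel = path_channel vertex"

lemma vertex_zero: "vertex 0 = 0"
  by (simp add: vertex_def breaks_first phi_zero zero_prod_def)

lemma hull_channel_inner:
  assumes "Suc l < K"
  shows "hull_channel False l = breaks ! Suc l - breaks ! l"
    and "hull_channel True l = \<phi> (breaks ! Suc l) - \<phi> (breaks ! l)"
  using assms by (simp_all add: hull_channel_def path_channel_def vertex_def)

lemma hull_channel_last: "hull_channel False (K - 1) = 0" "hull_channel True (K - 1) = 1 - \<phi> 1"
  by (simp_all add: hull_channel_def path_channel_def vertex_def breaks_last[simplified])

lemma hull_channel_nonneg: "l < K \<Longrightarrow> 0 \<le> hull_channel r l"
proof (cases "Suc l < K")
  case True
  then have "breaks ! l < breaks ! Suc l" using breaks_less by simp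
  moreover have "\<phi> (breaks ! l) \<le> \<phi> (breaks ! Suc l)"
    using True calculation breaks_range[of l] breaks_range[of "Suc l"] by (intro phi_mono) auto
  ultimately show ?thesis using hull_channel_inner[OF True] by (cases r) simp_all
next
  case False
  assume "l < K"
  then have "l = K - 1" using False by simp
  then show ?thesis using hull_channel_last phi_one by (cases r) simp_all
qed

lemma hull_channel_prefix: "s \<le> K \<Longrightarrow> col_sum s hull_channel = vertex s"
  using col_sum_path_channel vertex_zero unfolding hull_channel_def by simp

lemma hull_channel_total: "col_sum K hull_channel = (1, 1)"
  using hull_channel_prefix[of K] by (simp add: vertex_def)

lemma is_channel2_hull_channel: "is_channel2 (K, hull_channel)"
proof -
  have "(\<Sum>l<K. hull_channel r l) = 1" for r
    using hull_channel_total by (cases r) (simp_all add: col_sum_def)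
  then show ?thesis using hull_channel_nonneg by (simp add: is_channel2_def)
qed

lemma hull_channel_slopes_sorted: "slopes_sorted K hull_channel"
  unfolding slopes_sorted_def
proof (intro allI impI)
  fix l l' assume ll': "l < l'" "l' < K"
  show "hull_channel True l * hull_channel False l' \<le> hull_channel True l' * hull_channel False l"
  proof (cases "Suc l' < K")
    case True
    let ?a = "breaks ! l" and ?b = "breaks ! Suc l" and ?c = "breaks ! l'" and ?d = "breaks ! Suc l'"
    have "?b \<le> ?c"
    proof (cases "Suc l = l'")
      case False
      then show ?thesis using breaks_less[of "Suc l" l'] ll' by simp
    qed simp
    moreover have "?a < ?b" "?c < ?d" using breaks_less ll' True by simp_all
    moreover have "?a \<in> {0..1}" "?b \<in> {0..1}" "?d \<in> {0..1}"
      using breaks_range ll' True by simp_all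
    ultimately have "(\<phi> ?b - \<phi> ?a) / (?b - ?a) \<le> (\<phi> ?d - \<phi> ?c) / (?d - ?c)"
      by (intro convex_on_chord_slopes_mono[OF phi_convex])
    then have "(\<phi> ?b - \<phi> ?a) * (?d - ?c) \<le> (\<phi> ?d - \<phi> ?c) * (?b - ?a)"
      using \<open>?a < ?b\<close> \<open>?c < ?d\<close> by (simp add: field_simps)
    then show ?thesis using hull_channel_inner True ll' by simp
  next
    case False
    then have "l' = K - 1" using ll' by simp
    then show ?thesis using hull_channel_last hull_channel_nonneg[of l False] phi_one ll' by simp
  qed
qed

lemma S_subset_hull_zonotope: "S \<subseteq> zonotope K hull_channel"
proof
  fix p assume p: "p \<in> S"
  obtain x y where xy: "p = (x, y)" by (cases p)
  obtain s where s: "s < K" "breaks ! s = x"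
    using p xy set_breaks by (metis fst_conv image_eqI in_set_conv_nth)
  have q: "(1 - x, 1 - y) \<in> S" using S_symmetric p unfolding xy by (metis diff_Pair)
  then obtain s' where s': "s' < K" "breaks ! s' = 1 - x"
    using set_breaks by (metis fst_conv image_eqI in_set_conv_nth)
  have x: "x \<in> {0..1}" using p xy S_unit_square by auto
  have lo: "(x, \<phi> x) \<in> zonotope K hull_channel"
    using col_sum_prefix_in_zonotope[of s K hull_channel] hull_channel_prefix[of s] s
    by (simp add: vertex_def)
  have hi: "(x, 1 - \<phi> (1 - x)) \<in> zonotope K hull_channel"
    using zonotope_reflect[OF col_sum_prefix_in_zonotope[of s' K hull_channel]] hull_channel_prefix[of s'] s'
    by (simp add: hull_channel_total vertex_def)
  have "\<phi> x \<le> y" using phi_le[OF x] p unfolding xy by (simp add: hull_inc)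
  moreover have "\<phi> (1 - x) \<le> 1 - y" using phi_le[of "1 - x" "1 - y"] x q by (simp add: hull_inc)
  ultimately show "p \<in> zonotope K hull_channel"
    unfolding xy using convex_vertical_between[OF convex_zonotope lo hi] by simp
qed

lemma hull_zonotope_least:
  assumes C: "is_channel2 (m, C)" and S: "S \<subseteq> zonotope m C"
  shows "zonotope K hull_channel \<subseteq> zonotope m C"
proof (rule zonotope_subset_of_sorted_slopes)
  note total = channel_col_sum[OF C]
  have hull: "convex hull S \<subseteq> zonotope m C" by (intro hull_minimal S convex_zonotope)
  have vertex: "vertex s \<in> zonotope m C" for s
  proof (cases "s < K")
    case True
    then have "vertex s = (breaks ! s, \<phi> (breaks ! s))" by (simp add: vertex_def)
    then show ?thesis using subsetD[OF hull phi_in_hull[OF breaks_range[OF True]]] by simp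
  next
    case False
    then show ?thesis using col_sum_in_zonotope[of m C] total by (simp add: vertex_def)
  qed
  show "\<forall>s\<le>K. col_sum s hull_channel \<in> zonotope m C"
    using vertex hull_channel_prefix by simp
  show "\<forall>s\<le>K. col_sum K hull_channel - col_sum s hull_channel \<in> zonotope m C"
    using zonotope_reflect[OF vertex] total hull_channel_prefix hull_channel_total by simp
  show "\<forall>l<K. \<forall>r. 0 \<le> hull_channel r l" using hull_channel_nonneg by blast
  show "slopes_sorted K hull_channel" by (rule hull_channel_slopes_sorted)
qed

end

lemma exists_lower_hull_channel:
  assumes "finite S" "(0, 0) \<in> S" "(1, 1) \<in> S" "S \<subseteq> {0..1} \<times> {0..1}" "\<forall>p\<in>S. (1, 1) - p \<in> S"
  shows "\<exists>K G. is_channel2 (K, G) \<and> S \<subseteq> zonotope K G \<and>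
           (\<forall>m C. is_channel2 (m, C) \<and> S \<subseteq> zonotope m C \<longrightarrow> zonotope K G \<subseteq> zonotope m C)"
proof -
  have "compact (convex hull S)" using assms(1) by (rule finite_imp_compact_convex_hull)
  moreover have "\<forall>x\<in>{0..1}. \<exists>y. (x, y) \<in> convex hull S"
  proof
    fix x :: real assume "x \<in> {0..1}"
    then have "(1 - x) *\<^sub>R (0, 0) + x *\<^sub>R (1, 1) \<in> convex hull (S :: (real \<times> real) set)"
      using assms(2,3) by (intro convexD[OF convex_convex_hull] hull_inc) auto
    then show "\<exists>y. (x, y) \<in> convex hull S" by auto
  qed
  ultimately obtain \<phi> where "lower_boundary (convex hull S) \<phi>"
    using lower_boundary_exists by blast
  then interpret lower_hull S \<phi> using assms by unfold_locales
  show ?thesis using is_channel2_hull_channel S_subset_hull_zonotope hull_zonotope_least by blast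
qed

section \<open>The meet of two-column channels\<close>

definition meet_points :: "nat \<Rightarrow> (nat \<Rightarrow> channel2) \<Rightarrow> (real \<times> real) set" where
  "meet_points n M = {(0, 0), (1, 1)} \<union> (\<lambda>i. first_col (M i)) ` {..<n}
                       \<union> (\<lambda>i. (1, 1) - first_col (M i)) ` {..<n}"

lemma meet_points_basic:
  "finite (meet_points n M)" "(0, 0) \<in> meet_points n M" "(1, 1) \<in> meet_points n M"
  "\<forall>p\<in>meet_points n M. (1, 1) - p \<in> meet_points n M"
  unfolding meet_points_def by (auto simp: zero_prod_def[symmetric])

lemma meet_points_unit_square:
  assumes "\<forall>i<n. is_channel2 (M i) \<and> fst (M i) = 2"
  shows "meet_points n M \<subseteq> {0..1} \<times> {0..1}"
  using first_col_in_unit_square assms unfolding meet_points_def by fastforce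

lemma refines_all_iff_meet_points:
  assumes H: "is_channel2 (m, C)" and M: "\<forall>i<n. is_channel2 (M i) \<and> fst (M i) = 2"
  shows "(\<forall>i<n. refines (m, C) (M i)) \<longleftrightarrow> meet_points n M \<subseteq> zonotope m C"
proof -
  have "(\<forall>i<n. refines (m, C) (M i)) \<longleftrightarrow> (\<forall>i<n. first_col (M i) \<in> zonotope m C)"
    using refines_two_cols_iff[OF H] M by simp
  moreover have "meet_points n M \<subseteq> zonotope m C \<longleftrightarrow> (\<forall>i<n. first_col (M i) \<in> zonotope m C)"
  proof
    assume P: "\<forall>i<n. first_col (M i) \<in> zonotope m C"
    have "(1, 1) - first_col (M i) \<in> zonotope m C" if "i < n" for i
      using zonotope_reflect[of "first_col (M i)" m C] P that channel_col_sum[OF H] by simp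
    moreover have "(0, 0) \<in> zonotope m C" "(1, 1) \<in> zonotope m C"
      using zero_in_zonotope col_sum_in_zonotope channel_col_sum[OF H] by metis+
    ultimately show "meet_points n M \<subseteq> zonotope m C"
      using P unfolding meet_points_def by (simp add: image_subset_iff)
  qed (simp add: meet_points_def image_subset_iff)
  ultimately show ?thesis by simp
qed

theorem mainTheorem12:
  fixes n :: nat and M :: "nat \<Rightarrow> channel2"
  assumes "n \<ge> 1"
    and "\<forall>i < n. is_channel2 (M i) \<and> fst (M i) = 2"
  shows "\<exists>G. is_channel2 G \<and> (\<forall>i < n. refines G (M i)) \<and>
            (\<forall>H. is_channel2 H \<and> (\<forall>i < n. refines H (M i)) \<longrightarrow> refines H G)"
proof -
  obtain K G where G: "is_channel2 (K, G)" "meet_points n M \<subseteq> zonotope K G"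
    and least: "\<And>m C. is_channel2 (m, C) \<Longrightarrow> meet_points n M \<subseteq> zonotope m C \<Longrightarrow>
                       zonotope K G \<subseteq> zonotope m C"
    using exists_lower_hull_channel[OF meet_points_basic(1-3) meet_points_unit_square[OF assms(2)]
        meet_points_basic(4)] by blast
  have "\<forall>i<n. refines (K, G) (M i)"
    using refines_all_iff_meet_points[OF G(1) assms(2)] G(2) by blast
  moreover have "refines H (K, G)" if H: "is_channel2 H" "\<forall>i<n. refines H (M i)" for H
  proof (cases H)
    case (Pair m C)
    then have "meet_points n M \<subseteq> zonotope m C"
      using refines_all_iff_meet_points[of m C n M] H assms(2) by simp
    then show ?thesis using refines_of_zonotope_subset[OF _ G(1)] least H(1) Pair by simp
  qed
  ultimately show ?thesis using G(1) by blast
qed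

end
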